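(* Suppose $(y,X)$ follows the functional logistic regression model. Let $\rho$ satisfy (A1) and (A2), and let $w$ be a non-negative bounded function. (a) For every $\theta=(\alpha,\beta)\in\mathbb R\times L^2([0,1])$, $L(\theta_0)\le L(\theta)$. (b) Assume further that $\beta_0\in\mathcal H^\star$ and that $$\mathbb P\big(\{\langle X,\beta\rangle=a\}\cup\{w(X)=0\}\big)<1\quad\text{for all } a\in\mathbb R,\ \beta\in\mathcal H^\star \text{ with } (a,\beta)\ne0.$$ Then $L(\theta_0)<L(\theta)$ for every $\alpha\in\mathbb R$ and $\beta\in\mathcal H^\star$ with $\theta=(\alpha,\beta)\ne(\alpha_0,\beta_0)$.
   Context: Model: $y\in\{0,1\}$ and $X\in L^2([0,1])$, with $y\mid X\sim\mathrm{Bernoulli}(F(\alpha_0+\langle X,\beta_0\rangle))$, where $F(t)=e^t/(1+e^t)$, $\langle u,v\rangle=\int_0^1uv$, and $\theta_0=(\alpha_0,\beta_0)$. Loss: $d(y,t)=-y\log F(t)-(1-y)\log(1-F(t))$, $\psi=\rho'$, $G(t)=\int_0^t\psi(-\log u)\,du$, and $$\phi(y,t)=\rho(d(y,t))+G(F(t))+G(1-F(t)),\qquad L(\theta)=\mathbb E\big(\phi(y,\alpha+\langle X,\beta\rangle)w(X)\big).$$ Spaces: $\mathcal H$ is $L^2([0,1])$ or $C([0,1])$. $W^{1,\mathcal H}$ is $W^{1,2}([0,1])$ in the first case, and in the second case the Hölder space of $C^1$ functions with Lipschitz derivative. $\mathcal H^\star=\mathcal H$ when $\beta_0\in\mathcal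 H$, and $\mathcal H^\star=W^{1,\mathcal H}$ when $\beta_0\in W^{1,\mathcal H}$. Assumptions: (A1) $\rho:[0,\infty)\to\mathbb R$ is bounded and continuously differentiable, with bounded derivative $\psi$, and $\rho(0)=0$. (A2) $\psi\ge0$, and there exists $a\ge\log2$ with $\psi(t)>0$ for $0<t<a$. *)

theory Defs
  imports "HOL-Probability.Probability"
begin

definition L2_01 :: "(real \<Rightarrow> real) set" where
  "L2_01 = {f. set_borel_measurable lborel {0..1} f \<and>
               set_integrable lborel {0..1} (\<lambda>t. (f t)^2)}"

definition C_01 :: "(real \<Rightarrow> real) set" where
  "C_01 = {f. continuous_on {0..1} f}"

text \<open>W^{1,2}([0,1]): absolutely continuous functions whose derivative lies in L^2.\<close>
definition W12_01 :: "(real \<Rightarrow> real) set" where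
  "W12_01 = {f. \<exists>g\<in>L2_01. \<forall>t\<in>{0..1}. f t = f 0 + (LINT s:{0..t}|lborel. g s)}"

definition C11_01 :: "(real \<Rightarrow> real) set" where
  "C11_01 = {f. \<exists>f' K. (\<forall>t\<in>{0..1}. (f has_real_derivative f' t) (at t within {0..1})) \<and>
                       (\<forall>s\<in>{0..1}. \<forall>t\<in>{0..1}. \<bar>f' s - f' t\<bar> \<le> K * \<bar>s - t\<bar>)}"

definition Hstar_spaces :: "(real \<Rightarrow> real) set set" where
  "Hstar_spaces = {L2_01, C_01, W12_01, C11_01}"

text \<open>Equality as elements of L^2([0,1]) (almost everywhere on [0,1]).\<close>
definition L2_eq :: "(real \<Rightarrow> real) \<Rightarrow> (real \<Rightarrow> real) \<Rightarrow> bool" where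
  "L2_eq u v \<longleftrightarrow> (AE t in lborel. t \<in> {0..1} \<longrightarrow> u t = v t)"

definition ip01 :: "(real \<Rightarrow> real) \<Rightarrow> (real \<Rightarrow> real) \<Rightarrow> real" where
  "ip01 u v = (LINT t:{0..1}|lborel. u t * v t)"

definition logistic :: "real \<Rightarrow> real" where
  "logistic t = exp t / (1 + exp t)"

definition dev :: "real \<Rightarrow> real \<Rightarrow> real" where
  "dev y t = - y * ln (logistic t) - (1 - y) * ln (1 - logistic t)"

definition Gfun :: "(real \<Rightarrow> real) \<Rightarrow> real \<Rightarrow> real" where
  "Gfun \<psi> t = (LINT u:{0..t}|lborel. \<psi> (- ln u))"

definition phi :: "(real \<Rightarrow> real) \<Rightarrow> (real \<Rightarrow> real) \<Rightarrow> real \<Rightarrow> real \<Rightarrow> real" where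
  "phi \<rho> \<psi> y t = \<rho> (dev y t) + Gfun \<psi> (logistic t) + Gfun \<psi> (1 - logistic t)"

definition Lrisk :: "'a measure \<Rightarrow> ('a \<Rightarrow> real) \<Rightarrow> ('a \<Rightarrow> real \<Rightarrow> real) \<Rightarrow>
    (real \<Rightarrow> real) \<Rightarrow> (real \<Rightarrow> real) \<Rightarrow> ((real \<Rightarrow> real) \<Rightarrow> real) \<Rightarrow>
    real \<Rightarrow> (real \<Rightarrow> real) \<Rightarrow> real" where
  "Lrisk M y X \<rho> \<psi> w \<alpha> \<beta> =
     (LINT \<omega>|M. phi \<rho> \<psi> (y \<omega>) (\<alpha> + ip01 (X \<omega>) \<beta>) * w (X \<omega>))"

text \<open>The sigma-algebra generated by the L^2-valued random element X
  (generated by the continuous linear functionals x \<mapsto> <x,g>, g in L^2,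
   which generate the Borel sigma-algebra of the separable space L^2).\<close>
definition sigmaX :: "'a measure \<Rightarrow> ('a \<Rightarrow> real \<Rightarrow> real) \<Rightarrow> 'a measure" where
  "sigmaX M X = sigma (space M)
     {(\<lambda>\<omega>. ip01 (X \<omega>) g) -` B \<inter> space M | g B. g \<in> L2_01 \<and> B \<in> sets borel}"

end

theory Submission
  imports Defs
begin

text \<open>
  Write F for the logistic function and p(X) = F(\<alpha>0 + \<langle>X, \<beta>0\<rangle>) for the true conditional
  probability of y = 1. Conditioning on X turns L(\<theta>) into E[h_p(X)(F(\<alpha> + \<langle>X, \<beta>\<rangle>)) w(X)],
  where h_p(s) = p \<rho>(-ln s) + (1 - p) \<rho>(-ln (1 - s)) + G(s) + G(1 - s) is the risk of predicting s
  when y ~ Bernoulli(p). The correction terms G are exactly what makes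
  h_p'(s) = (s - p) (\<psi>(-ln s)/s + \<psi>(-ln (1 - s))/(1 - s)). As \<psi> \<ge> 0, h_p decreases before p
  and increases after it, and \<psi> > 0 on (0, ln 2) lets the second factor vanish at most at
  s = 1/2, so p is the unique minimiser of h_p (Fisher consistency). Integrating gives (a).
  If equality holds in (b), then almost surely F(\<alpha> + \<langle>X, \<beta>\<rangle>) = p(X) or w(X) = 0, i.e.
  \<langle>X, \<beta> - \<beta>0\<rangle> = \<alpha>0 - \<alpha> or w(X) = 0; the identifiability hypothesis rules this out, since
  H* is a linear space contained in L^2.
\<close>

lemma set_borel_measurable_01_iff:
  fixes f :: "real \<Rightarrow> real"
  shows "set_borel_measurable lborel {0..1} f \<longleftrightarrow> f \<in> borel_measurable (restrict_space lborel {0..1::real})"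
  unfolding set_borel_measurable_def by (subst borel_measurable_restrict_space_iff) auto

lemma L2_01_measurable: "f \<in> L2_01 \<Longrightarrow> f \<in> borel_measurable (restrict_space lborel {0..1})"
  unfolding L2_01_def set_borel_measurable_01_iff by simp

lemma set_integrable_mult_L2_01:
  assumes f: "f \<in> L2_01" and g: "g \<in> L2_01"
  shows "set_integrable lborel {0..1} (\<lambda>t. f t * g t)"
proof (rule set_integrable_bound)
  show "set_integrable lborel {0..1} (\<lambda>t. (f t)\<^sup>2 + (g t)\<^sup>2)"
    using f g unfolding L2_01_def by (intro set_integral_add(1)) auto
  show "set_borel_measurable lborel {0..1} (\<lambda>t. f t * g t)"
    unfolding set_borel_measurable_01_iff using L2_01_measurable[OF f] L2_01_measurable[OF g] by simp
  have "\<bar>a * b\<bar> \<le> a\<^sup>2 + b\<^sup>2" for a b :: real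
  proof -
    have "2 * (\<bar>a\<bar> * \<bar>b\<bar>) \<le> a\<^sup>2 + b\<^sup>2"
      using sum_squares_bound[of "\<bar>a\<bar>" "\<bar>b\<bar>"] by (simp add: mult.assoc)
    moreover have "0 \<le> \<bar>a\<bar> * \<bar>b\<bar>" by simp
    ultimately show ?thesis unfolding abs_mult by linarith
  qed
  then show "AE t in lborel. t \<in> {0..1} \<longrightarrow> norm (f t * g t) \<le> norm ((f t)\<^sup>2 + (g t)\<^sup>2)"
    by auto
qed

lemma set_integrable_L2_01:
  assumes "g \<in> L2_01"
  shows "set_integrable lborel {0..1} g"
proof -
  have "(\<lambda>_. 1) \<in> L2_01"
    unfolding L2_01_def set_borel_measurable_01_iff by (auto intro: borel_integrable_atLeastAtMost')
  then have "set_integrable lborel {0..1} (\<lambda>t. g t * 1)"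
    by (rule set_integrable_mult_L2_01[OF assms])
  then show ?thesis by simp
qed

lemma L2_01_diff:
  assumes f: "f \<in> L2_01" and g: "g \<in> L2_01"
  shows "(\<lambda>t. f t - g t) \<in> L2_01"
proof -
  have meas: "(\<lambda>t. f t - g t) \<in> borel_measurable (restrict_space lborel {0..1})"
    using L2_01_measurable[OF f] L2_01_measurable[OF g] by simp
  have "set_integrable lborel {0..1} (\<lambda>t. (f t - g t)\<^sup>2)"
  proof (rule set_integrable_bound)
    show "set_integrable lborel {0..1} (\<lambda>t. 2 * (f t)\<^sup>2 + 2 * (g t)\<^sup>2)"
      using f g unfolding L2_01_def by (intro set_integral_add(1) set_integrable_mult_right) auto
    show "set_borel_measurable lborel {0..1} (\<lambda>t. (f t - g t)\<^sup>2)"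
      unfolding set_borel_measurable_01_iff using meas by simp
    have "(a - b)\<^sup>2 \<le> 2 * a\<^sup>2 + 2 * b\<^sup>2" for a b :: real
      using sum_squares_bound[of a "-b"] by (simp add: power2_diff)
    then show "AE t in lborel. t \<in> {0..1} \<longrightarrow> norm ((f t - g t)\<^sup>2) \<le> norm (2 * (f t)\<^sup>2 + 2 * (g t)\<^sup>2)"
      by auto
  qed
  with meas show ?thesis unfolding L2_01_def set_borel_measurable_01_iff by simp
qed

lemma L2_eq_diff_zero_iff: "L2_eq (\<lambda>t. f t - g t) (\<lambda>_. 0) \<longleftrightarrow> L2_eq f g"
  unfolding L2_eq_def by simp

lemma ip01_diff_right:
  assumes "x \<in> L2_01" "f \<in> L2_01" "g \<in> L2_01"
  shows "ip01 x (\<lambda>t. f t - g t) = ip01 x f - ip01 x g"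
  unfolding ip01_def right_diff_distrib
  by (rule set_integral_diff(2)[OF set_integrable_mult_L2_01 set_integrable_mult_L2_01]) (use assms in auto)

lemma C_01_subset_L2_01: "C_01 \<subseteq> L2_01"
proof
  fix f assume "f \<in> C_01"
  then have f: "continuous_on {0..1} f" unfolding C_01_def by simp
  have "set_borel_measurable lborel {0..1} f"
    unfolding set_borel_measurable_def using borel_measurable_continuous_on_indicator[OF _ f] by simp
  moreover have "set_integrable lborel {0..1} (\<lambda>t. (f t)\<^sup>2)"
    by (intro borel_integrable_atLeastAtMost' continuous_intros f)
  ultimately show "f \<in> L2_01" unfolding L2_01_def by simp
qed

lemma C11_01_subset_C_01: "C11_01 \<subseteq> C_01"
proof
  fix f assume "f \<in> C11_01"
  then obtain f' where "\<forall>t\<in>{0..1}. (f has_real_derivative f' t) (at t within {0..1})"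
    unfolding C11_01_def by blast
  then show "f \<in> C_01"
    unfolding C_01_def by (intro CollectI DERIV_continuous_on) blast
qed

lemma W12_01_subset_C_01: "W12_01 \<subseteq> C_01"
proof
  fix f assume "f \<in> W12_01"
  then obtain g where g: "g \<in> L2_01" and f: "\<forall>t\<in>{0..1}. f t = f 0 + (LINT s:{0..t}|lborel. g s)"
    unfolding W12_01_def by auto
  have g_int: "set_integrable lborel {0..t} g" if "t \<le> 1" for t
    by (rule set_integrable_subset[OF set_integrable_L2_01[OF g]]) (use that in auto)
  have "continuous_on {0..1} (\<lambda>t. f 0 + integral {0..t} g)"
    using set_borel_integral_eq_integral(1)[OF g_int]
    by (intro continuous_intros indefinite_integral_continuous_1) simp
  moreover have "f 0 + integral {0..t} g = f t" if "t \<in> {0..1}" for t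
    using bspec[OF f that] set_borel_integral_eq_integral(2)[OF g_int] that by simp
  ultimately have "continuous_on {0..1} f"
    by (rule continuous_on_eq)
  then show "f \<in> C_01" unfolding C_01_def by simp
qed

lemma Hstar_spaces_subset_L2_01: "Hs \<in> Hstar_spaces \<Longrightarrow> Hs \<subseteq> L2_01"
  unfolding Hstar_spaces_def using C_01_subset_L2_01 C11_01_subset_C_01 W12_01_subset_C_01 by auto

lemma C_01_diff: "f \<in> C_01 \<Longrightarrow> g \<in> C_01 \<Longrightarrow> (\<lambda>t. f t - g t) \<in> C_01"
  unfolding C_01_def by (auto intro: continuous_on_diff)

lemma W12_01_diff:
  assumes "f \<in> W12_01" "g \<in> W12_01"
  shows "(\<lambda>t. f t - g t) \<in> W12_01"
proof -
  obtain f' where f': "f' \<in> L2_01" and f: "\<forall>t\<in>{0..1}. f t = f 0 + (LINT s:{0..t}|lborel. f' s)"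
    using assms(1) unfolding W12_01_def by auto
  obtain g' where g': "g' \<in> L2_01" and g: "\<forall>t\<in>{0..1}. g t = g 0 + (LINT s:{0..t}|lborel. g' s)"
    using assms(2) unfolding W12_01_def by auto
  have "f t - g t = (f 0 - g 0) + (LINT s:{0..t}|lborel. f' s - g' s)" if t: "t \<in> {0..1}" for t
  proof -
    have "set_integrable lborel {0..t} f'" "set_integrable lborel {0..t} g'"
      using t by (auto intro: set_integrable_subset[OF set_integrable_L2_01[OF f']]
          set_integrable_subset[OF set_integrable_L2_01[OF g']])
    then show ?thesis using bspec[OF f t] bspec[OF g t] by simp
  qed
  then show ?thesis unfolding W12_01_def using L2_01_diff[OF f' g'] by blast
qed

lemma C11_01_diff:
  assumes "f \<in> C11_01" "g \<in> C11_01"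
  shows "(\<lambda>t. f t - g t) \<in> C11_01"
proof -
  obtain f' K where f: "\<forall>t\<in>{0..1}. (f has_real_derivative f' t) (at t within {0..1})"
    and f': "\<forall>s\<in>{0..1}. \<forall>t\<in>{0..1}. \<bar>f' s - f' t\<bar> \<le> K * \<bar>s - t\<bar>"
    using assms(1) unfolding C11_01_def by blast
  obtain g' L where g: "\<forall>t\<in>{0..1}. (g has_real_derivative g' t) (at t within {0..1})"
    and g': "\<forall>s\<in>{0..1}. \<forall>t\<in>{0..1}. \<bar>g' s - g' t\<bar> \<le> L * \<bar>s - t\<bar>"
    using assms(2) unfolding C11_01_def by blast
  have "\<forall>t\<in>{0..1}. ((\<lambda>t. f t - g t) has_real_derivative f' t - g' t) (at t within {0..1})"
    using f g by (auto intro: DERIV_diff)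
  moreover have "\<forall>s\<in>{0..1}. \<forall>t\<in>{0..1}. \<bar>(f' s - g' s) - (f' t - g' t)\<bar> \<le> (K + L) * \<bar>s - t\<bar>"
  proof (intro ballI)
    fix s t :: real assume "s \<in> {0..1}" "t \<in> {0..1}"
    then have "\<bar>f' s - f' t\<bar> \<le> K * \<bar>s - t\<bar>" "\<bar>g' s - g' t\<bar> \<le> L * \<bar>s - t\<bar>"
      using f' g' by auto
    then show "\<bar>(f' s - g' s) - (f' t - g' t)\<bar> \<le> (K + L) * \<bar>s - t\<bar>"
      by (simp add: distrib_right abs_le_iff)
  qed
  ultimately show ?thesis
    unfolding C11_01_def by (intro CollectI exI[of _ "\<lambda>t. f' t - g' t"] exI[of _ "K + L"] conjI)
qed

lemma Hstar_spaces_diff: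
  "Hs \<in> Hstar_spaces \<Longrightarrow> f \<in> Hs \<Longrightarrow> g \<in> Hs \<Longrightarrow> (\<lambda>t. f t - g t) \<in> Hs"
  unfolding Hstar_spaces_def using L2_01_diff C_01_diff W12_01_diff C11_01_diff by auto

lemma logistic_pos: "0 < logistic t"
  unfolding logistic_def by (simp add: add_pos_pos)

lemma logistic_less_one: "logistic t < 1"
  unfolding logistic_def by (simp add: add_pos_pos)

lemma continuous_on_logistic: "continuous_on A logistic"
proof -
  have "1 + exp t \<noteq> (0::real)" for t
    using exp_gt_zero[of t] by linarith
  then show ?thesis
    unfolding logistic_def[abs_def] by (intro continuous_intros) auto
qed

lemma inj_logistic: "inj logistic"
proof (rule injI)
  fix t u assume "logistic t = logistic u"
  then have "exp t * (1 + exp u) = exp u * (1 + exp t)"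
    unfolding logistic_def by (simp add: frac_eq_eq add_pos_pos[THEN less_imp_neq, symmetric])
  then show "t = u" by (simp add: algebra_simps)
qed

locale bounded_score =
  fixes \<psi> :: "real \<Rightarrow> real"
  assumes score_continuous: "continuous_on {0..} \<psi>"
    and score_bounded: "\<exists>B. \<forall>t\<ge>0. \<bar>\<psi> t\<bar> \<le> B"
begin

lemma set_integrable_score_neg_ln:
  assumes "s \<le> 1"
  shows "set_integrable lborel {0..s} (\<lambda>u. \<psi> (- ln u))"
proof -
  obtain B where B: "\<forall>t\<ge>0. \<bar>\<psi> t\<bar> \<le> B" using score_bounded by blast
  txt \<open>\<psi> is only controlled on [0, \<infinity>); on [0, s] it is evaluated at -ln u \<ge> 0 (note ln 0 = 0),
    so it may be replaced by the globally continuous \<psi> \<circ> max 0.\<close>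
  have "continuous_on UNIV (\<lambda>v. \<psi> (max 0 v))"
    by (rule continuous_on_compose2[OF score_continuous]) (auto intro: continuous_intros)
  then have meas: "(\<lambda>u. \<psi> (max 0 (- ln u))) \<in> borel_measurable lborel"
    by (rule borel_measurable_continuous_on) simp
  have "set_integrable lborel {0..s} (\<lambda>u. \<psi> (max 0 (- ln u)))"
    unfolding set_integrable_def
    by (rule integrableI_bounded_set_indicator[where B=B]) (use meas B in \<open>auto simp: emeasure_lborel_Icc_eq\<close>)
  moreover have "max 0 (- ln u) = - ln u" if "u \<in> {0..s}" for u
    using that assms by (cases "u = 0") auto
  ultimately show ?thesis
    by (subst set_integrable_cong[OF refl refl, where f' = "\<lambda>u. \<psi> (max 0 (- ln u))"]) simp_all
qed

lemma Gfun_eq_integral: "s \<le> 1 \<Longrightarrow> Gfun \<psi> s = integral {0..s} (\<lambda>u. \<psi> (- ln u))"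
  unfolding Gfun_def by (rule set_borel_integral_eq_integral(2)[OF set_integrable_score_neg_ln])

lemma integrable_on_score_neg_ln: "(\<lambda>u. \<psi> (- ln u)) integrable_on {0..1}"
  using set_borel_integral_eq_integral(1)[OF set_integrable_score_neg_ln[of 1]] by simp

lemma Gfun_continuous_on: "continuous_on {0..1} (Gfun \<psi>)"
  by (rule continuous_on_eq[OF indefinite_integral_continuous_1[OF integrable_on_score_neg_ln]])
     (simp add: Gfun_eq_integral)

lemma Gfun_has_real_derivative:
  assumes x: "0 < x" "x < 1"
  shows "(Gfun \<psi> has_real_derivative \<psi> (- ln x)) (at x)"
proof -
  have "isCont \<psi> (- ln x)"
    using x by (intro continuous_on_interior[OF score_continuous]) (simp add: ln_less_zero)
  moreover have "isCont (\<lambda>u. - ln u) x"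
    using x by (intro continuous_intros) auto
  ultimately have "isCont (\<lambda>u. \<psi> (- ln u)) x"
    by (metis isCont_o2)
  then have "((\<lambda>s. integral {0..s} (\<lambda>u. \<psi> (- ln u))) has_vector_derivative \<psi> (- ln x))
      (at x within {0..1})"
    using integral_has_vector_derivative_continuous_at[OF integrable_on_score_neg_ln, of x "{}"] x
    by (simp add: continuous_at_imp_continuous_within)
  moreover have "at x within {0..1} = at x"
    using x by (intro at_within_interior) simp
  ultimately have "((\<lambda>s. integral {0..s} (\<lambda>u. \<psi> (- ln u))) has_real_derivative \<psi> (- ln x)) (at x)"
    by (simp add: has_real_derivative_iff_has_vector_derivative)
  then show ?thesis
    by (rule has_field_derivative_transform_within_open[where S = "{..<1}"])
       (use x in \<open>simp_all add: Gfun_eq_integral\<close>)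
qed

end

text \<open>cond_risk \<rho> \<psi> p (F t) is the expectation of phi \<rho> \<psi> y t for y ~ Bernoulli(p).\<close>
definition cond_risk :: "(real \<Rightarrow> real) \<Rightarrow> (real \<Rightarrow> real) \<Rightarrow> real \<Rightarrow> real \<Rightarrow> real" where
  "cond_risk \<rho> \<psi> p s = p * \<rho> (- ln s) + (1 - p) * \<rho> (- ln (1 - s)) + Gfun \<psi> s + Gfun \<psi> (1 - s)"

definition cond_risk_weight :: "(real \<Rightarrow> real) \<Rightarrow> real \<Rightarrow> real" where
  "cond_risk_weight \<psi> s = \<psi> (- ln s) / s + \<psi> (- ln (1 - s)) / (1 - s)"

lemma phi_eq_cond_risk: "y \<in> {0, 1} \<Longrightarrow> phi \<rho> \<psi> y t = cond_risk \<rho> \<psi> y (logistic t)"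
  unfolding phi_def cond_risk_def dev_def by auto

lemma cond_risk_affine:
  "cond_risk \<rho> \<psi> p s = cond_risk \<rho> \<psi> 0 s + p * (cond_risk \<rho> \<psi> 1 s - cond_risk \<rho> \<psi> 0 s)"
  unfolding cond_risk_def by (simp add: algebra_simps)

lemma cond_risk_symmetric: "cond_risk \<rho> \<psi> (1 - p) (1 - s) = cond_risk \<rho> \<psi> p s"
  unfolding cond_risk_def by (simp add: algebra_simps)

locale robust_loss = bounded_score \<psi> for \<psi> +
  fixes \<rho> :: "real \<Rightarrow> real"
  assumes loss_bounded: "\<exists>B. \<forall>t\<ge>0. \<bar>\<rho> t\<bar> \<le> B"
    and loss_derivative: "\<forall>t\<ge>0. (\<rho> has_real_derivative \<psi> t) (at t within {0..})"
    and score_nonneg: "\<forall>t\<ge>0. \<psi> t \<ge> 0"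
    and score_pos: "\<exists>a\<ge>ln 2. \<forall>t. 0 < t \<and> t < a \<longrightarrow> \<psi> t > 0"
begin

lemma loss_continuous: "continuous_on {0..} \<rho>"
  using loss_derivative by (intro DERIV_continuous_on) auto

lemma loss_has_real_derivative:
  assumes "0 < t"
  shows "(\<rho> has_real_derivative \<psi> t) (at t)"
proof -
  have "at t within {0..} = at t"
    using assms by (intro at_within_interior) simp
  then show ?thesis
    using loss_derivative assms by (metis less_imp_le)
qed

lemma cond_risk_has_real_derivative:
  assumes s: "0 < s" "s < 1"
  shows "(cond_risk \<rho> \<psi> p has_real_derivative (s - p) * cond_risk_weight \<psi> s) (at s)"
proof -
  have one_minus: "((\<lambda>u. 1 - u) has_real_derivative -1) (at s)"
    by (auto intro!: derivative_eq_intros)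
  have neg_ln: "((\<lambda>u. - ln u) has_real_derivative - inverse s) (at s)"
    using s by (auto intro!: derivative_eq_intros simp: inverse_eq_divide)
  have neg_ln1: "((\<lambda>u. - ln (1 - u)) has_real_derivative inverse (1 - s)) (at s)"
    using s by (auto intro!: derivative_eq_intros simp: inverse_eq_divide)
  have "((\<lambda>u. \<rho> (- ln u)) has_real_derivative \<psi> (- ln s) * - inverse s) (at s)"
    using s by (intro DERIV_chain2[OF loss_has_real_derivative neg_ln]) (simp add: ln_less_zero)
  moreover have "((\<lambda>u. \<rho> (- ln (1 - u))) has_real_derivative \<psi> (- ln (1 - s)) * inverse (1 - s)) (at s)"
    using s by (intro DERIV_chain2[OF loss_has_real_derivative neg_ln1]) (simp add: ln_less_zero)
  moreover have "((\<lambda>u. Gfun \<psi> (1 - u)) has_real_derivative \<psi> (- ln (1 - s)) * -1) (at s)"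
    using s by (intro DERIV_chain2[OF Gfun_has_real_derivative one_minus]) simp_all
  ultimately have "(cond_risk \<rho> \<psi> p has_real_derivative
      p * (\<psi> (- ln s) * - inverse s) + (1 - p) * (\<psi> (- ln (1 - s)) * inverse (1 - s))
      + \<psi> (- ln s) + \<psi> (- ln (1 - s)) * -1) (at s)"
    unfolding cond_risk_def[abs_def] using s
    by (intro DERIV_add DERIV_cmult Gfun_has_real_derivative)
  moreover have "p * (\<psi> (- ln s) * - inverse s) + (1 - p) * (\<psi> (- ln (1 - s)) * inverse (1 - s))
      + \<psi> (- ln s) + \<psi> (- ln (1 - s)) * -1 = (s - p) * cond_risk_weight \<psi> s"
    using s by (simp add: cond_risk_weight_def inverse_eq_divide field_simps)
  ultimately show ?thesis by simp
qed

lemma cond_risk_weight_nonneg: "0 < s \<Longrightarrow> s < 1 \<Longrightarrow> 0 \<le> cond_risk_weight \<psi> s"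
  unfolding cond_risk_weight_def using score_nonneg by simp

text \<open>This is where (A2) needs a \<ge> ln 2: for s \<noteq> 1/2 one of -ln s and -ln (1 - s) lies in
  (0, ln 2).\<close>
lemma cond_risk_weight_pos:
  assumes s: "0 < s" "s < 1" "s \<noteq> 1/2"
  shows "0 < cond_risk_weight \<psi> s"
proof -
  obtain a where a: "ln 2 \<le> a" "\<forall>t. 0 < t \<and> t < a \<longrightarrow> \<psi> t > 0"
    using score_pos by blast
  have pos: "0 < \<psi> (- ln u) / u" if "1/2 < u" "u < 1" for u
  proof -
    have "- ln u < ln 2"
      using that ln_less_cancel_iff[of "1/2" u] by (simp add: ln_div)
    then show ?thesis using a that by (simp add: ln_less_zero)
  qed
  have nonneg: "0 \<le> \<psi> (- ln u) / u" if "0 < u" "u < 1" for u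
    using that score_nonneg by simp
  show ?thesis
  proof (cases "1/2 < s")
    case True
    then show ?thesis
      using pos[of s] nonneg[of "1 - s"] s unfolding cond_risk_weight_def by linarith
  next
    case False
    then show ?thesis
      using pos[of "1 - s"] nonneg[of s] s unfolding cond_risk_weight_def by linarith
  qed
qed

lemma cond_risk_less_right:
  assumes "0 < p" "p < s" "s < 1"
  shows "cond_risk \<rho> \<psi> p p < cond_risk \<rho> \<psi> p s"
proof -
  have deriv: "(cond_risk \<rho> \<psi> p has_real_derivative (z - p) * cond_risk_weight \<psi> z) (at z)"
    if "p \<le> z" "z \<le> s" for z
    using cond_risk_has_real_derivative that assms by simp
  have cont: "continuous_on {a..b} (cond_risk \<rho> \<psi> p)" if "p \<le> a" "b \<le> s" for a b
    using that by (intro continuous_at_imp_continuous_on ballI DERIV_isCont[OF deriv]) auto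
  txt \<open>The weight may vanish at 1/2, so strict growth is only claimed up to q.\<close>
  define q where "q = (if p < 1/2 \<and> 1/2 < s then 1/2 else s)"
  have q: "p < q" "q \<le> s"
    using assms unfolding q_def by auto
  have "cond_risk \<rho> \<psi> p p < cond_risk \<rho> \<psi> p q"
  proof (rule DERIV_pos_imp_increasing_open[OF \<open>p < q\<close> _ cont])
    fix z assume z: "p < z" "z < q"
    then have "z \<noteq> 1/2" unfolding q_def by (auto split: if_splits)
    with z q assms show "\<exists>d. (cond_risk \<rho> \<psi> p has_real_derivative d) (at z) \<and> 0 < d"
      by (intro exI[of _ "(z - p) * cond_risk_weight \<psi> z"] conjI deriv mult_pos_pos
          cond_risk_weight_pos) auto
  qed (use q in auto)
  also have "cond_risk \<rho> \<psi> p q \<le> cond_risk \<rho> \<psi> p s"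
  proof (rule DERIV_nonneg_imp_increasing_open[OF \<open>q \<le> s\<close> _ cont])
    fix z assume z: "q < z" "z < s"
    with q assms show "\<exists>d. (cond_risk \<rho> \<psi> p has_real_derivative d) (at z) \<and> 0 \<le> d"
      by (intro exI[of _ "(z - p) * cond_risk_weight \<psi> z"] conjI deriv mult_nonneg_nonneg
          cond_risk_weight_nonneg) auto
  qed (use q in auto)
  finally show ?thesis .
qed

lemma cond_risk_strict_min:
  assumes "0 < p" "p < 1" "0 < s" "s < 1" "s \<noteq> p"
  shows "cond_risk \<rho> \<psi> p p < cond_risk \<rho> \<psi> p s"
proof (cases "p < s")
  case False
  then have "cond_risk \<rho> \<psi> (1 - p) (1 - p) < cond_risk \<rho> \<psi> (1 - p) (1 - s)"
    using assms by (intro cond_risk_less_right) auto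
  then show ?thesis by (simp only: cond_risk_symmetric)
qed (use assms cond_risk_less_right in auto)

lemma cond_risk_min:
  "0 < p \<Longrightarrow> p < 1 \<Longrightarrow> 0 < s \<Longrightarrow> s < 1 \<Longrightarrow> cond_risk \<rho> \<psi> p p \<le> cond_risk \<rho> \<psi> p s"
  using cond_risk_strict_min[of p s] by (cases "s = p") simp_all

lemma continuous_on_cond_risk_logistic: "continuous_on A (\<lambda>v. cond_risk \<rho> \<psi> p (logistic v))"
proof -
  have F: "0 < logistic v" "logistic v < 1" for v
    using logistic_pos logistic_less_one by auto
  have ln: "continuous_on A (\<lambda>v. - ln (logistic v))" "continuous_on A (\<lambda>v. - ln (1 - logistic v))"
    using F by (auto intro!: continuous_intros continuous_on_logistic simp: less_imp_neq[symmetric])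
  have F_cont: "continuous_on A (\<lambda>v. logistic v)" "continuous_on A (\<lambda>v. 1 - logistic v)"
    by (intro continuous_intros continuous_on_logistic)+
  have "continuous_on A (\<lambda>v. \<rho> (- ln (logistic v)))" "continuous_on A (\<lambda>v. \<rho> (- ln (1 - logistic v)))"
    using F by (auto intro!: continuous_on_compose2[OF loss_continuous ln(1)]
        continuous_on_compose2[OF loss_continuous ln(2)] simp: less_imp_le)
  moreover have "continuous_on A (\<lambda>v. Gfun \<psi> (logistic v))" "continuous_on A (\<lambda>v. Gfun \<psi> (1 - logistic v))"
    using F by (auto intro!: continuous_on_compose2[OF Gfun_continuous_on F_cont(1)]
        continuous_on_compose2[OF Gfun_continuous_on F_cont(2)] simp: less_imp_le)
  ultimately show ?thesis
    unfolding cond_risk_def by (intro continuous_intros)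
qed

lemma bounded_cond_risk_logistic: "\<exists>K. \<forall>v. \<bar>cond_risk \<rho> \<psi> p (logistic v)\<bar> \<le> K"
proof -
  obtain B where B: "\<forall>t\<ge>0. \<bar>\<rho> t\<bar> \<le> B" using loss_bounded by blast
  obtain BG where BG: "\<forall>s\<in>{0..1}. \<bar>Gfun \<psi> s\<bar> \<le> BG"
    using compact_imp_bounded[OF compact_continuous_image[OF Gfun_continuous_on]]
    unfolding bounded_iff by auto
  have bound: "\<bar>cond_risk \<rho> \<psi> p s\<bar> \<le> \<bar>p\<bar> * B + \<bar>1 - p\<bar> * B + 2 * BG"
    if "0 < s" "s < 1" for s
  proof -
    have "\<bar>\<rho> (- ln s)\<bar> \<le> B" "\<bar>\<rho> (- ln (1 - s))\<bar> \<le> B"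
      using B that by (simp_all add: ln_less_zero less_imp_le)
    then have "\<bar>p * \<rho> (- ln s)\<bar> \<le> \<bar>p\<bar> * B" "\<bar>(1 - p) * \<rho> (- ln (1 - s))\<bar> \<le> \<bar>1 - p\<bar> * B"
      by (simp_all add: abs_mult mult_left_mono)
    moreover have "\<bar>Gfun \<psi> s\<bar> \<le> BG" "\<bar>Gfun \<psi> (1 - s)\<bar> \<le> BG"
      using BG that by auto
    ultimately show ?thesis
      unfolding cond_risk_def by linarith
  qed
  show ?thesis
    using bound[OF logistic_pos logistic_less_one] by blast
qed

end

lemma abs_mult_le_of_abs_le_one: "\<bar>u\<bar> \<le> 1 \<Longrightarrow> \<bar>v\<bar> \<le> B \<Longrightarrow> \<bar>u * v\<bar> \<le> (B::real)"
  using mult_mono[of "\<bar>u\<bar>" 1 "\<bar>v\<bar>" B] by (simp add: abs_mult)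

locale functional_logistic_model = prob_space M
  for M :: "'a measure" +
  fixes X :: "'a \<Rightarrow> real \<Rightarrow> real" and y :: "'a \<Rightarrow> real"
    and \<alpha>0 :: real and \<beta>0 :: "real \<Rightarrow> real"
  assumes X_L2: "\<forall>\<omega>\<in>space M. X \<omega> \<in> L2_01"
    and X_meas: "\<forall>g\<in>L2_01. (\<lambda>\<omega>. ip01 (X \<omega>) g) \<in> borel_measurable M"
    and y_meas: "y \<in> borel_measurable M"
    and y_01: "\<forall>\<omega>\<in>space M. y \<omega> \<in> {0, 1}"
    and beta0_L2: "\<beta>0 \<in> L2_01"
    and model: "AE \<omega> in M. real_cond_exp M (sigmaX M X) y \<omega>
                              = logistic (\<alpha>0 + ip01 (X \<omega>) \<beta>0)"
begin

lemma space_sigmaX: "space (sigmaX M X) = space M"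
  unfolding sigmaX_def by (rule space_measure_of) auto

lemma sets_sigmaX: "sets (sigmaX M X) = sigma_sets (space M)
    {(\<lambda>\<omega>. ip01 (X \<omega>) g) -` B \<inter> space M | g B. g \<in> L2_01 \<and> B \<in> sets borel}"
  unfolding sigmaX_def by (rule sets_measure_of) auto

lemma subalgebra_sigmaX: "subalgebra M (sigmaX M X)"
  unfolding subalgebra_def space_sigmaX sets_sigmaX
  using X_meas by (auto intro!: sets.sigma_sets_subset measurable_sets)

lemma sigma_finite_subalgebra_sigmaX: "sigma_finite_subalgebra M (sigmaX M X)"
  by (intro finite_measure_subalgebra_is_sigma_finite finite_measure_subalgebra.intro
      finite_measure_subalgebra_axioms.intro subalgebra_sigmaX finite_measure_axioms)

lemma ip01_X_measurable_sigmaX: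
  assumes "g \<in> L2_01"
  shows "(\<lambda>\<omega>. ip01 (X \<omega>) g) \<in> borel_measurable (sigmaX M X)"
proof (rule measurableI)
  fix B :: "real set" assume "B \<in> sets borel"
  then show "(\<lambda>\<omega>. ip01 (X \<omega>) g) -` B \<inter> space (sigmaX M X) \<in> sets (sigmaX M X)"
    unfolding space_sigmaX sets_sigmaX using assms by (blast intro: sigma_sets.Basic)
qed simp

definition success_prob :: "'a \<Rightarrow> real" where
  "success_prob \<omega> = logistic (\<alpha>0 + ip01 (X \<omega>) \<beta>0)"

lemma success_prob_bounds: "0 < success_prob \<omega>" "success_prob \<omega> < 1"
  unfolding success_prob_def using logistic_pos logistic_less_one by auto

lemma success_prob_measurable: "success_prob \<in> borel_measurable (sigmaX M X)"
  unfolding success_prob_def[abs_def]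
  using borel_measurable_continuous_on[OF continuous_on_logistic[of UNIV], of "\<lambda>\<omega>. \<alpha>0 + ip01 (X \<omega>) \<beta>0"]
    ip01_X_measurable_sigmaX[OF beta0_L2]
  by simp

lemma integrable_if_bounded:
  fixes f :: "'a \<Rightarrow> real"
  shows "f \<in> borel_measurable M \<Longrightarrow> \<forall>\<omega>\<in>space M. \<bar>f \<omega>\<bar> \<le> K \<Longrightarrow> integrable M f"
  by (intro integrable_const_bound[where B=K] AE_I2) auto

lemma integral_y_mult_eq_success_prob:
  assumes Z: "Z \<in> borel_measurable (sigmaX M X)" and bound: "\<forall>\<omega>\<in>space M. \<bar>Z \<omega>\<bar> \<le> K"
  shows "(\<integral>\<omega>. y \<omega> * Z \<omega> \<partial>M) = (\<integral>\<omega>. success_prob \<omega> * Z \<omega> \<partial>M)"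
proof -
  have Z_M: "Z \<in> borel_measurable M"
    using measurable_from_subalg[OF subalgebra_sigmaX Z] .
  have "\<bar>y \<omega> * Z \<omega>\<bar> \<le> K" if "\<omega> \<in> space M" for \<omega>
    using bound y_01 that by (intro abs_mult_le_of_abs_le_one) auto
  then have "integrable M (\<lambda>\<omega>. Z \<omega> * y \<omega>)"
    using Z_M y_meas by (intro integrable_if_bounded[of _ K]) (auto simp: mult.commute)
  then have "(\<integral>\<omega>. Z \<omega> * real_cond_exp M (sigmaX M X) y \<omega> \<partial>M) = (\<integral>\<omega>. Z \<omega> * y \<omega> \<partial>M)"
    by (rule sigma_finite_subalgebra.real_cond_exp_intg(2)[OF sigma_finite_subalgebra_sigmaX _ Z y_meas])
  moreover have "(\<integral>\<omega>. Z \<omega> * real_cond_exp M (sigmaX M X) y \<omega> \<partial>M) = (\<integral>\<omega>. Z \<omega> * success_prob \<omega> \<partial>M)"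
    using model Z_M measurable_from_subalg[OF subalgebra_sigmaX success_prob_measurable]
    unfolding success_prob_def[symmetric] by (intro integral_cong_AE) auto
  ultimately show ?thesis
    by (simp add: mult.commute)
qed

end

locale weighted_logistic_risk =
  functional_logistic_model M X y \<alpha>0 \<beta>0 + robust_loss \<psi> \<rho>
  for M :: "'a measure" and X y \<alpha>0 \<beta>0 \<psi> \<rho> +
  fixes w :: "(real \<Rightarrow> real) \<Rightarrow> real"
  assumes weight_nonneg: "\<forall>x. 0 \<le> w x"
    and weight_bounded: "\<exists>B. \<forall>x. w x \<le> B"
    and weight_measurable: "(\<lambda>\<omega>. w (X \<omega>)) \<in> borel_measurable (sigmaX M X)"
begin

lemma cond_risk_index_measurable:
  assumes "\<beta> \<in> L2_01"
  shows "(\<lambda>\<omega>. cond_risk \<rho> \<psi> q (logistic (\<alpha> + ip01 (X \<omega>) \<beta>)) * w (X \<omega>))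
    \<in> borel_measurable (sigmaX M X)"
  using borel_measurable_continuous_on[OF continuous_on_cond_risk_logistic,
      of "\<lambda>\<omega>. \<alpha> + ip01 (X \<omega>) \<beta>"]
    ip01_X_measurable_sigmaX[OF assms] weight_measurable
  by simp

lemma cond_risk_index_bounded:
  "\<exists>K. \<forall>\<omega>. \<bar>cond_risk \<rho> \<psi> q (logistic (\<alpha> + ip01 (X \<omega>) \<beta>)) * w (X \<omega>)\<bar> \<le> K"
proof -
  obtain Bw where Bw: "\<forall>x. w x \<le> Bw" using weight_bounded by blast
  obtain K where K: "\<forall>v. \<bar>cond_risk \<rho> \<psi> q (logistic v)\<bar> \<le> K"
    using bounded_cond_risk_logistic by blast
  have "\<bar>cond_risk \<rho> \<psi> q (logistic v) * w x\<bar> \<le> K * Bw" for v x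
  proof -
    have "\<bar>cond_risk \<rho> \<psi> q (logistic v)\<bar> \<le> K" "0 \<le> w x" "w x \<le> Bw"
      using K Bw weight_nonneg by auto
    moreover from this have "0 \<le> K" by linarith
    ultimately show ?thesis by (simp add: abs_mult mult_mono)
  qed
  then show ?thesis by blast
qed

definition risk_integrand :: "real \<Rightarrow> (real \<Rightarrow> real) \<Rightarrow> 'a \<Rightarrow> real" where
  "risk_integrand \<alpha> \<beta> \<omega> =
     cond_risk \<rho> \<psi> (success_prob \<omega>) (logistic (\<alpha> + ip01 (X \<omega>) \<beta>)) * w (X \<omega>)"

lemma Lrisk_eq_integral_risk_integrand:
  assumes \<beta>: "\<beta> \<in> L2_01"
  shows "integrable M (risk_integrand \<alpha> \<beta>)"
    and "Lrisk M y X \<rho> \<psi> w \<alpha> \<beta> = integral\<^sup>L M (risk_integrand \<alpha> \<beta>)"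
proof -
  define c where "c q \<omega> = cond_risk \<rho> \<psi> q (logistic (\<alpha> + ip01 (X \<omega>) \<beta>)) * w (X \<omega>)" for q \<omega>
  define a where "a \<omega> = c 1 \<omega> - c 0 \<omega>" for \<omega>
  have c_meas: "c q \<in> borel_measurable (sigmaX M X)" for q
    unfolding c_def[abs_def] using cond_risk_index_measurable[OF \<beta>] .
  then have a_meas: "a \<in> borel_measurable (sigmaX M X)"
    unfolding a_def[abs_def] by simp
  obtain K0 K1 where K0: "\<forall>\<omega>. \<bar>c 0 \<omega>\<bar> \<le> K0" and K1: "\<forall>\<omega>. \<bar>c 1 \<omega>\<bar> \<le> K1"
    unfolding c_def using cond_risk_index_bounded by meson
  then have a_bound: "\<forall>\<omega>. \<bar>a \<omega>\<bar> \<le> K1 + K0"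
    unfolding a_def by (meson abs_triangle_ineq4 add_mono order_trans)
  note to_M = measurable_from_subalg[OF subalgebra_sigmaX]
  have "\<bar>success_prob \<omega>\<bar> \<le> 1" for \<omega>
    using success_prob_bounds[of \<omega>] by simp
  then have int_a: "integrable M (\<lambda>\<omega>. y \<omega> * a \<omega>)" "integrable M (\<lambda>\<omega>. success_prob \<omega> * a \<omega>)"
    using y_01 a_bound to_M[OF a_meas] to_M[OF success_prob_measurable] y_meas
    by (auto intro!: integrable_if_bounded[of _ "K1 + K0"] abs_mult_le_of_abs_le_one)
  have int_c0: "integrable M (c 0)"
    using K0 to_M[OF c_meas] by (auto intro!: integrable_if_bounded[of _ K0])
  have integrand: "risk_integrand \<alpha> \<beta> \<omega> = success_prob \<omega> * a \<omega> + c 0 \<omega>" for \<omega>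
    unfolding risk_integrand_def a_def c_def
    by (subst cond_risk_affine) (simp add: algebra_simps)
  have phi: "phi \<rho> \<psi> (y \<omega>) (\<alpha> + ip01 (X \<omega>) \<beta>) * w (X \<omega>) = y \<omega> * a \<omega> + c 0 \<omega>"
    if "\<omega> \<in> space M" for \<omega>
    unfolding a_def c_def phi_eq_cond_risk[OF bspec[OF y_01 that]]
    by (subst cond_risk_affine) (simp add: algebra_simps)
  show "integrable M (risk_integrand \<alpha> \<beta>)"
    unfolding integrand using int_a int_c0 by simp
  have "Lrisk M y X \<rho> \<psi> w \<alpha> \<beta> = (\<integral>\<omega>. y \<omega> * a \<omega> + c 0 \<omega> \<partial>M)"
    unfolding Lrisk_def using phi by (rule Bochner_Integration.integral_cong[OF refl])
  also have "\<dots> = (\<integral>\<omega>. y \<omega> * a \<omega> \<partial>M) + integral\<^sup>L M (c 0)"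
    using int_a int_c0 by simp
  also have "\<dots> = (\<integral>\<omega>. success_prob \<omega> * a \<omega> \<partial>M) + integral\<^sup>L M (c 0)"
    using integral_y_mult_eq_success_prob[OF a_meas, of "K1 + K0"] a_bound by simp
  also have "\<dots> = integral\<^sup>L M (risk_integrand \<alpha> \<beta>)"
    unfolding integrand using int_a int_c0 by simp
  finally show "Lrisk M y X \<rho> \<psi> w \<alpha> \<beta> = integral\<^sup>L M (risk_integrand \<alpha> \<beta>)" .
qed

lemma risk_integrand_true_le: "risk_integrand \<alpha>0 \<beta>0 \<omega> \<le> risk_integrand \<alpha> \<beta> \<omega>"
  unfolding risk_integrand_def success_prob_def[symmetric]
  using cond_risk_min[OF success_prob_bounds logistic_pos logistic_less_one] weight_nonneg
  by (intro mult_right_mono) auto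

lemma risk_integrand_true_less:
  assumes "\<alpha> + ip01 (X \<omega>) \<beta> \<noteq> \<alpha>0 + ip01 (X \<omega>) \<beta>0" and "w (X \<omega>) \<noteq> 0"
  shows "risk_integrand \<alpha>0 \<beta>0 \<omega> < risk_integrand \<alpha> \<beta> \<omega>"
proof -
  have "logistic (\<alpha> + ip01 (X \<omega>) \<beta>) \<noteq> success_prob \<omega>"
    using assms(1) injD[OF inj_logistic] unfolding success_prob_def by blast
  then have "cond_risk \<rho> \<psi> (success_prob \<omega>) (success_prob \<omega>)
      < cond_risk \<rho> \<psi> (success_prob \<omega>) (logistic (\<alpha> + ip01 (X \<omega>) \<beta>))"
    by (rule cond_risk_strict_min[OF success_prob_bounds logistic_pos logistic_less_one])
  moreover have "0 < w (X \<omega>)"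
    using weight_nonneg assms(2) by (simp add: order_less_le)
  ultimately show ?thesis
    unfolding risk_integrand_def success_prob_def[symmetric] by (rule mult_strict_right_mono)
qed

lemma Lrisk_true_le:
  assumes "\<beta> \<in> L2_01"
  shows "Lrisk M y X \<rho> \<psi> w \<alpha>0 \<beta>0 \<le> Lrisk M y X \<rho> \<psi> w \<alpha> \<beta>"
  unfolding Lrisk_eq_integral_risk_integrand(2)[OF beta0_L2] Lrisk_eq_integral_risk_integrand(2)[OF assms]
  by (intro integral_mono Lrisk_eq_integral_risk_integrand(1) beta0_L2 assms risk_integrand_true_le)

lemma Lrisk_eq_true_imp_AE:
  assumes \<beta>: "\<beta> \<in> L2_01"
    and eq: "Lrisk M y X \<rho> \<psi> w \<alpha> \<beta> = Lrisk M y X \<rho> \<psi> w \<alpha>0 \<beta>0"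
  shows "AE \<omega> in M. \<alpha> + ip01 (X \<omega>) \<beta> = \<alpha>0 + ip01 (X \<omega>) \<beta>0 \<or> w (X \<omega>) = 0"
proof -
  define D where "D \<omega> = risk_integrand \<alpha> \<beta> \<omega> - risk_integrand \<alpha>0 \<beta>0 \<omega>" for \<omega>
  have "integrable M D" "integral\<^sup>L M D = 0"
    using eq Lrisk_eq_integral_risk_integrand[OF \<beta>] Lrisk_eq_integral_risk_integrand[OF beta0_L2]
    unfolding D_def[abs_def] by simp_all
  moreover have "0 \<le> D \<omega>" for \<omega>
    unfolding D_def using risk_integrand_true_le by simp
  ultimately have "AE \<omega> in M. D \<omega> = 0"
    using integral_nonneg_eq_0_iff_AE by (metis AE_I2)
  then show ?thesis
  proof eventually_elim
    case (elim \<omega>)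
    show ?case
    proof (rule ccontr)
      assume "\<not> ?case"
      then have "risk_integrand \<alpha>0 \<beta>0 \<omega> < risk_integrand \<alpha> \<beta> \<omega>"
        by (intro risk_integrand_true_less) auto
      with elim show False unfolding D_def by simp
    qed
  qed
qed

lemma Lrisk_true_less:
  assumes Hs: "Hs \<in> Hstar_spaces" "\<beta>0 \<in> Hs"
    and identifiable: "\<forall>a. \<forall>\<beta>\<in>Hs. (a \<noteq> 0 \<or> \<not> L2_eq \<beta> (\<lambda>_. 0)) \<longrightarrow>
               measure M {\<omega>\<in>space M. ip01 (X \<omega>) \<beta> = a \<or> w (X \<omega>) = 0} < 1"
    and \<beta>: "\<beta> \<in> Hs" and ne: "\<alpha> \<noteq> \<alpha>0 \<or> \<not> L2_eq \<beta> \<beta>0"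
  shows "Lrisk M y X \<rho> \<psi> w \<alpha>0 \<beta>0 < Lrisk M y X \<rho> \<psi> w \<alpha> \<beta>"
proof (rule ccontr)
  define d where "d t = \<beta> t - \<beta>0 t" for t
  have \<beta>_L2: "\<beta> \<in> L2_01" and d_Hs: "d \<in> Hs" and d_L2: "d \<in> L2_01"
    using Hstar_spaces_subset_L2_01[OF Hs(1)] Hstar_spaces_diff[OF Hs(1) \<beta> Hs(2)] \<beta>
    unfolding d_def[abs_def] by auto
  assume "\<not> Lrisk M y X \<rho> \<psi> w \<alpha>0 \<beta>0 < Lrisk M y X \<rho> \<psi> w \<alpha> \<beta>"
  then have "Lrisk M y X \<rho> \<psi> w \<alpha> \<beta> = Lrisk M y X \<rho> \<psi> w \<alpha>0 \<beta>0"
    using Lrisk_true_le[OF \<beta>_L2, of \<alpha>] by linarith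
  then have "AE \<omega> in M. \<alpha> + ip01 (X \<omega>) \<beta> = \<alpha>0 + ip01 (X \<omega>) \<beta>0 \<or> w (X \<omega>) = 0"
    by (rule Lrisk_eq_true_imp_AE[OF \<beta>_L2])
  then have "AE \<omega> in M. ip01 (X \<omega>) d = \<alpha>0 - \<alpha> \<or> w (X \<omega>) = 0"
    using AE_space
  proof eventually_elim
    case (elim \<omega>)
    then show ?case
      using ip01_diff_right[OF bspec[OF X_L2] \<beta>_L2 beta0_L2] unfolding d_def[abs_def] by auto
  qed
  moreover have "(\<lambda>\<omega>. ip01 (X \<omega>) d) \<in> borel_measurable M"
    using X_meas d_L2 by blast
  then have "{\<omega>\<in>space M. ip01 (X \<omega>) d = \<alpha>0 - \<alpha> \<or> w (X \<omega>) = 0} \<in> sets M"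
    using measurable_from_subalg[OF subalgebra_sigmaX weight_measurable] by measurable
  ultimately have "measure M {\<omega>\<in>space M. ip01 (X \<omega>) d = \<alpha>0 - \<alpha> \<or> w (X \<omega>) = 0} = 1"
    by (simp add: prob_Collect_eq_1)
  moreover have "\<alpha>0 - \<alpha> \<noteq> 0 \<or> \<not> L2_eq d (\<lambda>_. 0)"
    using ne L2_eq_diff_zero_iff[of \<beta> \<beta>0] unfolding d_def[abs_def] by auto
  then have "measure M {\<omega>\<in>space M. ip01 (X \<omega>) d = \<alpha>0 - \<alpha> \<or> w (X \<omega>) = 0} < 1"
    using identifiable d_Hs by blast
  ultimately show False by simp
qed

end

theorem lemmaA1:
  fixes M :: "'a measure" and X :: "'a \<Rightarrow> real \<Rightarrow> real" and y :: "'a \<Rightarrow> real"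
    and \<alpha>0 :: real and \<beta>0 :: "real \<Rightarrow> real"
    and \<rho> \<psi> :: "real \<Rightarrow> real" and w :: "(real \<Rightarrow> real) \<Rightarrow> real"
  assumes prob: "prob_space M"
    and X_L2: "\<forall>\<omega>\<in>space M. X \<omega> \<in> L2_01"
    and X_meas: "\<forall>g\<in>L2_01. (\<lambda>\<omega>. ip01 (X \<omega>) g) \<in> borel_measurable M"
    and y_meas: "y \<in> borel_measurable M"
    and y_01: "\<forall>\<omega>\<in>space M. y \<omega> \<in> {0, 1}"
    and beta0_L2: "\<beta>0 \<in> L2_01"
    and model: "AE \<omega> in M. real_cond_exp M (sigmaX M X) y \<omega>
                              = logistic (\<alpha>0 + ip01 (X \<omega>) \<beta>0)"
    and A1_bdd: "\<exists>B. \<forall>t\<ge>0. \<bar>\<rho> t\<bar> \<le> B"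
    and A1_deriv: "\<forall>t\<ge>0. (\<rho> has_real_derivative \<psi> t) (at t within {0..})"
    and A1_cont: "continuous_on {0..} \<psi>"
    and A1_dbdd: "\<exists>B. \<forall>t\<ge>0. \<bar>\<psi> t\<bar> \<le> B"
    and A1_zero: "\<rho> 0 = 0"
    and A2_nonneg: "\<forall>t\<ge>0. \<psi> t \<ge> 0"
    and A2_pos: "\<exists>a\<ge>ln 2. \<forall>t. 0 < t \<and> t < a \<longrightarrow> \<psi> t > 0"
    and w_nonneg: "\<forall>x. 0 \<le> w x"
    and w_bdd: "\<exists>B. \<forall>x. w x \<le> B"
    and w_meas: "(\<lambda>\<omega>. w (X \<omega>)) \<in> borel_measurable (sigmaX M X)"
  shows "(\<forall>\<alpha>. \<forall>\<beta>\<in>L2_01. Lrisk M y X \<rho> \<psi> w \<alpha>0 \<beta>0 \<le> Lrisk M y X \<rho> \<psi> w \<alpha> \<beta>)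
       \<and> (\<forall>Hs\<in>Hstar_spaces. \<beta>0 \<in> Hs \<longrightarrow>
            (\<forall>a. \<forall>\<beta>\<in>Hs. (a \<noteq> 0 \<or> \<not> L2_eq \<beta> (\<lambda>_. 0)) \<longrightarrow>
               measure M {\<omega>\<in>space M. ip01 (X \<omega>) \<beta> = a \<or> w (X \<omega>) = 0} < 1) \<longrightarrow>
            (\<forall>\<alpha>. \<forall>\<beta>\<in>Hs. (\<alpha> \<noteq> \<alpha>0 \<or> \<not> L2_eq \<beta> \<beta>0) \<longrightarrow>
               Lrisk M y X \<rho> \<psi> w \<alpha>0 \<beta>0 < Lrisk M y X \<rho> \<psi> w \<alpha> \<beta>))"
proof -
  interpret weighted_logistic_risk M X y \<alpha>0 \<beta>0 \<psi> \<rho> w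
    using prob X_L2 X_meas y_meas y_01 beta0_L2 model A1_bdd A1_deriv A1_cont A1_dbdd
      A2_nonneg A2_pos w_nonneg w_bdd w_meas
    by (simp add: weighted_logistic_risk_def weighted_logistic_risk_axioms_def
        functional_logistic_model_def functional_logistic_model_axioms_def
        robust_loss_def robust_loss_axioms_def bounded_score_def)
  show ?thesis
    using Lrisk_true_le Lrisk_true_less Hstar_spaces_subset_L2_01 by blast
qed

end
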